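(* Consider the stochastic discrete-time system $x_{k+1}=f(x_k,u_k,w_k)$, $k=0,\dots,N-1$, as described in the context, with a non-random initial state $x_0=x\in\mathcal{X}$, and let $g:\mathcal{X}\to\mathbb{R}$ be any function. For every initial state $x\in\mathcal{X}$ and every confidence level $\alpha\in(0,1]$ there exists a policy $\pi^*\in\Pi$ such that $$\mathrm{CVaR}_\alpha\big[Z^{\pi^*}_x\big]=\inf_{\pi\in\Pi}\mathrm{CVaR}_\alpha\big[Z^{\pi}_x\big]=\min_{\pi\in\Pi}\mathrm{CVaR}_\alpha\big[Z^{\pi}_x\big],$$ where $Z^\pi_x:=\max_{k=0,\dots,N} g(x_k)$ for the state trajectory $(x_0,\dots,x_N)$ generated from $x_0=x$ under $\pi$.
   Context: System: $x_{k+1}=f(x_k,u_k,w_k)$ for $k=0,\dots,N-1$, where $x_k\in\mathcal{X}\subseteq\mathbb{R}^n$, the control space $U$ and the disturbance space $D=\{d_1,\dots,d_W\}$ are finite sets of real vectors, and $f:\mathcal{X}\times U\times D\to\mathcal{X}$ is bounded and Lipschitz continuous. The disturbances $w_0,\dots,w_{N-1}$ are independent of each other and of the states and controls, with $\mathbb{P}[w_k=d_j]=p_j$, $p_j\ge 0$, $\sum_j p_j=1$; they are the only source of randomness (the initial state is deterministic). The policy set is $\Pi:=\{(\mu_0,\dots,\mu_{N-1})\mid \mu_k:H_k\to U\}$, where $H_k=\mathcal{X}^{k+1}$ is the set of state histories $(x_0,\dots,x_k)$, and $u_k=\mu_k(x_0,\dots,x_k)$. For a random variable $Z$ with finite expectation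 and $\alpha\in(0,1]$, $\mathrm{CVaR}_\alpha[Z]:=\min_{t\in\mathbb{R}}\{t+\frac{1}{\alpha}\mathbb{E}[\max\{Z-t,0\}]\}$. *)

theory Defs
  imports "HOL-Analysis.Analysis"
begin

text \<open>Policy set Pi: sequences of maps mu_k from state histories (x_0,...,x_k) to U.
  A history is a list of length k+1 of states in X.\<close>
definition policies :: "nat \<Rightarrow> 'x set \<Rightarrow> 'u set \<Rightarrow> (nat \<Rightarrow> 'x list \<Rightarrow> 'u) set" where
  "policies N X U = {mu. \<forall>k<N. \<forall>h. length h = Suc k \<and> set h \<subseteq> X \<longrightarrow> mu k h \<in> U}"

fun hist :: "('x \<Rightarrow> 'u \<Rightarrow> 'w \<Rightarrow> 'x) \<Rightarrow> (nat \<Rightarrow> 'w) \<Rightarrow> (nat \<Rightarrow> 'x list \<Rightarrow> 'u)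
              \<Rightarrow> 'x \<Rightarrow> nat \<Rightarrow> 'x list" where
  "hist f w mu x 0 = [x]"
| "hist f w mu x (Suc k) = (let h = hist f w mu x k in h @ [f (last h) (mu k h) (w k)])"

text \<open>Z^pi_x = max_{k=0..N} g(x_k), as a function of the index sequence js of the
  disturbances (w_k = d (js k)).\<close>
definition costZ :: "('x \<Rightarrow> 'u \<Rightarrow> 'w \<Rightarrow> 'x) \<Rightarrow> ('x \<Rightarrow> real) \<Rightarrow> (nat \<Rightarrow> 'w)
              \<Rightarrow> (nat \<Rightarrow> 'x list \<Rightarrow> 'u) \<Rightarrow> 'x \<Rightarrow> nat \<Rightarrow> (nat \<Rightarrow> nat) \<Rightarrow> real" where
  "costZ f g d mu x N js = Max (set (map g (hist f (\<lambda>k. d (js k)) mu x N)))"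

text \<open>CVaR of a random variable Z on a finite probability space (Omega, P):
  CVaR_alpha[Z] = min_t { t + (1/alpha) E[max(Z - t, 0)] } (the minimum is attained,
  so it equals the infimum used here).\<close>
definition CVaR :: "real \<Rightarrow> 'o set \<Rightarrow> ('o \<Rightarrow> real) \<Rightarrow> ('o \<Rightarrow> real) \<Rightarrow> real" where
  "CVaR alpha Omega P Z = (INF t::real. t + (1 / alpha) * (\<Sum>om\<in>Omega. P om * max (Z om - t) 0))"

definition dist_seqs :: "nat \<Rightarrow> nat \<Rightarrow> (nat \<Rightarrow> nat) set" where
  "dist_seqs N W = PiE {..<N} (\<lambda>_. {..<W})"

definition seq_prob :: "nat \<Rightarrow> (nat \<Rightarrow> real) \<Rightarrow> (nat \<Rightarrow> nat) \<Rightarrow> real" where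
  "seq_prob N p js = (\<Prod>k<N. p (js k))"

definition CVaR_cost where
  "CVaR_cost alpha f g d p W mu x N =
     CVaR alpha (dist_seqs N W) (seq_prob N p) (costZ f g d mu x N)"

end

theory Submission
  imports Defs
begin

text \<open>From the fixed initial state only finitely many states are reachable in N steps, since
  U and the disturbance set are finite. The cost of a policy depends only on its values on
  the finitely many histories built from these states, so the set of achievable CVaR values
  is finite and its minimum is attained.\<close>

lemma finite_image_if_determined_on_finite:
  fixes F :: "('a \<Rightarrow> 'b \<Rightarrow> 'u) \<Rightarrow> 'r"
  assumes "finite A" "finite U"
    and into: "\<And>mu k h. mu \<in> P \<Longrightarrow> (k, h) \<in> A \<Longrightarrow> mu k h \<in> U"
    and determined: "\<And>mu mu'. mu \<in> P \<Longrightarrow> (\<And>k h. (k, h) \<in> A \<Longrightarrow> mu k h = mu' k h)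
                       \<Longrightarrow> F mu = F mu'"
  shows "finite (F ` P)"
proof (rule finite_subset)
  show "F ` P \<subseteq> (\<lambda>\<phi>. F (curry \<phi>)) ` PiE A (\<lambda>_. U)"
  proof
    fix v assume "v \<in> F ` P"
    then obtain mu where "mu \<in> P" "v = F mu" by blast
    moreover have "restrict (case_prod mu) A \<in> PiE A (\<lambda>_. U)"
      using into[OF \<open>mu \<in> P\<close>] by auto
    moreover have "F mu = F (curry (restrict (case_prod mu) A))"
      by (rule determined[OF \<open>mu \<in> P\<close>]) simp
    ultimately show "v \<in> (\<lambda>\<phi>. F (curry \<phi>)) ` PiE A (\<lambda>_. U)" by blast
  qed
  show "finite ((\<lambda>\<phi>. F (curry \<phi>)) ` PiE A (\<lambda>_. U))"
    using assms(1,2) by (intro finite_imageI finite_PiE)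
qed

lemma finite_image_attains_Inf:
  fixes F :: "'a \<Rightarrow> 'b::conditionally_complete_linorder"
  assumes "finite (F ` P)" "P \<noteq> {}"
  shows "\<exists>pi\<in>P. F pi = (INF mu\<in>P. F mu) \<and> (\<forall>mu\<in>P. F pi \<le> F mu)"
proof -
  have "Min (F ` P) \<in> F ` P" using assms by simp
  then obtain pi where "pi \<in> P" "F pi = Min (F ` P)" by auto
  then show ?thesis using assms by (auto simp: cInf_eq_Min)
qed

fun reach :: "('x \<Rightarrow> 'u \<Rightarrow> 'w \<Rightarrow> 'x) \<Rightarrow> 'u set \<Rightarrow> (nat \<Rightarrow> 'w) \<Rightarrow> nat \<Rightarrow> 'x \<Rightarrow> nat \<Rightarrow> 'x set"
where
  "reach f U d W x 0 = {x}"
| "reach f U d W x (Suc k) = (\<lambda>(y, u, j). f y u (d j)) ` (reach f U d W x k \<times> U \<times> {..<W})"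

lemma finite_reach: "finite U \<Longrightarrow> finite (reach f U d W x k)"
  by (induction k) auto

lemma reach_subset:
  assumes "\<forall>y\<in>X. \<forall>u\<in>U. \<forall>j<W. f y u (d j) \<in> X" and "x \<in> X"
  shows "reach f U d W x k \<subseteq> X"
  using assms by (induction k) auto

lemma length_hist: "length (hist f w mu x k) = Suc k"
  by (induction k) (auto simp: Let_def)

lemma hist_cong:
  assumes "\<And>i. i < k \<Longrightarrow> mu i (hist f w mu x i) = mu' i (hist f w mu x i)"
  shows "hist f w mu x k = hist f w mu' x k"
  using assms
proof (induction k)
  case (Suc k)
  have "hist f w mu x k = hist f w mu' x k"
    using Suc by auto
  moreover have "mu k (hist f w mu x k) = mu' k (hist f w mu x k)"
    using Suc.prems by auto
  ultimately show ?case by (simp add: Let_def)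
qed simp

lemma hist_in_reach:
  assumes f_maps: "\<forall>y\<in>X. \<forall>u\<in>U. \<forall>j<W. f y u (d j) \<in> X" and "x \<in> X"
    and mu: "mu \<in> policies N X U" and js: "js \<in> dist_seqs N W" and "k \<le> N"
  shows "set (hist f (\<lambda>k. d (js k)) mu x k) \<subseteq> (\<Union>i\<le>k. reach f U d W x i)
    \<and> last (hist f (\<lambda>k. d (js k)) mu x k) \<in> reach f U d W x k"
  using \<open>k \<le> N\<close>
proof (induction k)
  case 0
  then show ?case by auto
next
  case (Suc k)
  let ?h = "hist f (\<lambda>k. d (js k)) mu x k"
  let ?y = "f (last ?h) (mu k ?h) (d (js k))"
  have IH: "set ?h \<subseteq> (\<Union>i\<le>k. reach f U d W x i)" "last ?h \<in> reach f U d W x k"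
    using Suc by simp_all
  have "k < N"
    using Suc.prems by simp
  have "set ?h \<subseteq> X"
    using IH(1) reach_subset[where f = f and d = d, OF f_maps \<open>x \<in> X\<close>] by blast
  then have "mu k ?h \<in> U"
    using mu \<open>k < N\<close> length_hist[of f _ mu x k] unfolding policies_def by blast
  moreover have "js k < W"
    using PiE_mem[OF js[unfolded dist_seqs_def]] \<open>k < N\<close> by simp
  ultimately have new: "?y \<in> reach f U d W x (Suc k)"
    using IH(2) by force
  have "(\<Union>i\<le>k. reach f U d W x i) \<subseteq> (\<Union>i\<le>Suc k. reach f U d W x i)"
    by (intro UN_mono) auto
  with IH(1) new have "set (?h @ [?y]) \<subseteq> (\<Union>i\<le>Suc k. reach f U d W x i)"
    by (auto simp del: reach.simps)
  moreover have "hist f (\<lambda>k. d (js k)) mu x (Suc k) = ?h @ [?y]"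
    by (simp add: Let_def)
  ultimately show ?case
    using new by simp
qed

lemma CVaR_cost_cong:
  assumes f_maps: "\<forall>y\<in>X. \<forall>u\<in>U. \<forall>j<W. f y u (d j) \<in> X" and "x \<in> X"
    and mu: "mu \<in> policies N X U"
    and agree: "\<And>k h. k < N \<Longrightarrow> length h = Suc k \<Longrightarrow> set h \<subseteq> (\<Union>i\<le>N. reach f U d W x i)
                  \<Longrightarrow> mu k h = mu' k h"
  shows "CVaR_cost alpha f g d p W mu x N = CVaR_cost alpha f g d p W mu' x N"
proof -
  have "hist f (\<lambda>k. d (js k)) mu x N = hist f (\<lambda>k. d (js k)) mu' x N"
    if js: "js \<in> dist_seqs N W" for js
  proof (rule hist_cong)
    fix i assume "i < N"
    have "set (hist f (\<lambda>k. d (js k)) mu x i) \<subseteq> (\<Union>j\<le>i. reach f U d W x j)"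
      using hist_in_reach[where f = f and d = d, OF f_maps \<open>x \<in> X\<close> mu js, of i] \<open>i < N\<close> by simp
    also have "\<dots> \<subseteq> (\<Union>j\<le>N. reach f U d W x j)"
      using \<open>i < N\<close> by (intro UN_mono) auto
    finally show "mu i (hist f (\<lambda>k. d (js k)) mu x i) = mu' i (hist f (\<lambda>k. d (js k)) mu x i)"
      by (rule agree[OF \<open>i < N\<close> length_hist])
  qed
  then show ?thesis
    unfolding CVaR_cost_def CVaR_def costZ_def by (simp cong: sum.cong)
qed

lemma finite_CVaR_cost_values:
  fixes f :: "'x \<Rightarrow> 'u \<Rightarrow> 'w \<Rightarrow> 'x"
  assumes U_fin: "finite U"
    and f_maps: "\<forall>y\<in>X. \<forall>u\<in>U. \<forall>j<W. f y u (d j) \<in> X" and "x \<in> X"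
  shows "finite ((\<lambda>mu. CVaR_cost alpha f g d p W mu x N) ` policies N X U)"
proof -
  define T where "T = (\<Union>i\<le>N. reach f U d W x i)"
  define A where "A = {(k, h). k < N \<and> length h = Suc k \<and> set h \<subseteq> T}"
  have "finite T"
    unfolding T_def using finite_reach[OF U_fin] by auto
  have "A \<subseteq> {..<N} \<times> {h. set h \<subseteq> T \<and> length h \<le> Suc N}"
    unfolding A_def by auto
  then have "finite A"
    by (rule finite_subset) (intro finite_SigmaI finite_lessThan finite_lists_length_le \<open>finite T\<close>)
  have "T \<subseteq> X"
    unfolding T_def using reach_subset[where f = f and d = d, OF f_maps \<open>x \<in> X\<close>] by blast
  show ?thesis
  proof (rule finite_image_if_determined_on_finite[OF \<open>finite A\<close> U_fin])
    fix mu k h assume "mu \<in> policies N X U" "(k, h) \<in> A"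
    moreover from \<open>(k, h) \<in> A\<close> have "k < N" "length h = Suc k" "set h \<subseteq> X"
      using \<open>T \<subseteq> X\<close> unfolding A_def by auto
    ultimately show "mu k h \<in> U"
      unfolding policies_def by blast
  next
    fix mu mu' :: "nat \<Rightarrow> 'x list \<Rightarrow> 'u"
    assume "mu \<in> policies N X U" and agree: "\<And>k h. (k, h) \<in> A \<Longrightarrow> mu k h = mu' k h"
    show "CVaR_cost alpha f g d p W mu x N = CVaR_cost alpha f g d p W mu' x N"
    proof (rule CVaR_cost_cong[where f = f and d = d, OF f_maps \<open>x \<in> X\<close> \<open>mu \<in> policies N X U\<close>])
      fix k h assume "k < N" "length h = Suc k" "set h \<subseteq> (\<Union>i\<le>N. reach f U d W x i)"
      then have "(k, h) \<in> A" unfolding A_def T_def by (simp only: mem_Collect_eq case_prod_conv)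
      then show "mu k h = mu' k h" by (rule agree)
    qed
  qed
qed

lemma policies_nonempty:
  assumes "U \<noteq> {}"
  shows "policies N X U \<noteq> {}"
proof -
  obtain u where "u \<in> U"
    using assms by blast
  then have "(\<lambda>k h. u) \<in> policies N X U"
    unfolding policies_def by simp
  then show ?thesis by blast
qed

theorem lemma1:
  fixes f :: "real^'n \<Rightarrow> real^'m \<Rightarrow> real^'d \<Rightarrow> real^'n"
    and X :: "(real^'n) set" and U :: "(real^'m) set"
    and d :: "nat \<Rightarrow> real^'d" and p :: "nat \<Rightarrow> real" and W N :: nat
    and g :: "real^'n \<Rightarrow> real" and x :: "real^'n" and alpha :: real
  assumes U_fin: "finite U" and U_ne: "U \<noteq> {}"
    and p_nonneg: "\<forall>j<W. p j \<ge> 0" and p_sum: "(\<Sum>j<W. p j) = 1"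
    and f_maps: "\<forall>y\<in>X. \<forall>u\<in>U. \<forall>j<W. f y u (d j) \<in> X"
    and f_bdd: "bounded ((\<lambda>(y, u, w). f y u w) ` (X \<times> U \<times> d ` {..<W}))"
    and f_lip: "\<exists>L. L-lipschitz_on (X \<times> U \<times> d ` {..<W}) (\<lambda>(y, u, w). f y u w)"
    and x_in: "x \<in> X"
    and alpha: "0 < alpha" "alpha \<le> 1"
  shows "\<exists>pi\<in>policies N X U.
           CVaR_cost alpha f g d p W pi x N
             = (INF mu\<in>policies N X U. CVaR_cost alpha f g d p W mu x N)
         \<and> (\<forall>mu\<in>policies N X U. CVaR_cost alpha f g d p W pi x N \<le> CVaR_cost alpha f g d p W mu x N)"
proof (rule finite_image_attains_Inf)
  show "finite ((\<lambda>mu. CVaR_cost alpha f g d p W mu x N) ` policies N X U)"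
    by (rule finite_CVaR_cost_values[where f = f and d = d, OF U_fin f_maps x_in])
  show "policies N X U \<noteq> {}"
    by (rule policies_nonempty[OF U_ne])
qed

end
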